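(* Let $V$ be a finite-dimensional vector space over a field with basis $B=\{v_1,\dots,v_N\}$, and let $S$ be a (possibly infinite) set of pairwise commuting endomorphisms of $V$ such that: (a) for each $T\in S$, after reordering $B$, the matrix of $T$ with respect to $B$ is in Jordan canonical form; (b) for each $T\in S$, every Jordan block of size greater than $1$ has eigenvalue $0$. Let $B'\subset B$ be the set of basis vectors that are (genuine, not merely generalized) eigenvectors of every $T\in S$, and assume that distinct elements of $B'$ are distinguished by their $S$-eigenvalues, i.e.\ for $v_i\neq v_j$ in $B'$ there is $T\in S$ whose eigenvalues on $v_i$ and $v_j$ differ. Let $W\subset V$ be a subspace preserved by every $T\in S$. Then $W\neq0$ if and only if $W$ contains some element of $B'$. *)

theory Defs
  imports "Jordan_Normal_Form.Jordan_Normal_Form" "HOL-Combinatorics.Permutations"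
begin

text \<open>V = K^N with basis B = the unit vectors e_0..e_(N-1); an endomorphism T is
  represented by its matrix A w.r.t. B (column j = coordinates of T e_j).\<close>

definition reordered_jordan :: "nat \<Rightarrow> 'a::field mat \<Rightarrow> (nat \<Rightarrow> nat) \<Rightarrow> (nat \<times> 'a) list \<Rightarrow> bool" where
  "reordered_jordan N A \<sigma> n_as \<longleftrightarrow>
     \<sigma> permutes {..<N} \<and> mat N N (\<lambda>(i,j). A $$ (\<sigma> i, \<sigma> j)) = jordan_matrix n_as"

definition common_eigen_basis_vec :: "nat \<Rightarrow> 'a::field mat set \<Rightarrow> nat \<Rightarrow> bool" where
  "common_eigen_basis_vec N S i \<longleftrightarrow>
     i < N \<and> (\<forall>A\<in>S. \<exists>c. A *\<^sub>v unit_vec N i = c \<cdot>\<^sub>v unit_vec N i)"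

definition subspace_of :: "nat \<Rightarrow> 'a::field vec set \<Rightarrow> bool" where
  "subspace_of N W \<longleftrightarrow> W \<subseteq> carrier_vec N \<and> 0\<^sub>v N \<in> W \<and>
     (\<forall>v\<in>W. \<forall>w\<in>W. v + w \<in> W) \<and> (\<forall>c. \<forall>v\<in>W. c \<cdot>\<^sub>v v \<in> W)"

end

theory Submission
  imports Defs
begin

text \<open>Every matrix in \<open>S\<close> sends each basis vector \<open>e\<^sub>k\<close> either to a multiple of itself or,
  inside a nilpotent Jordan block, to the next vector \<open>e\<^sub>p\<close> of its chain; call this a shift
  \<open>k \<rightarrow> p\<close>. Commutativity makes shifts acyclic: a cycle yields a product \<open>X\<close> of elements of
  \<open>S\<close> and a shifting \<open>A \<in> S\<close> with \<open>X A e\<^sub>k = e\<^sub>k\<close>, and \<open>X A = A X\<close> pushes this fixed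
  point down the chain of \<open>A\<close> to its head, where \<open>A\<close> vanishes. So the number of indices
  reachable from \<open>k\<close> by shifts, the height of \<open>k\<close>, drops along every shift. Take \<open>w \<in> W\<close>
  nonzero minimising the sum of \<open>height k + 1\<close> over its support. Every \<open>A \<in> S\<close> acts
  diagonally on that support, since a shift would make \<open>A w\<close> lighter; subtracting eigenvalue
  multiples of \<open>w\<close> shows that all coordinates of \<open>w\<close> carry the same eigenvalues, and the
  separation hypothesis then leaves a single basis vector.\<close>

lemma jordan_matrix_nonzero_entry:
  assumes "\<forall>(n, a) \<in> set n_as. 1 < n \<longrightarrow> a = 0"
    and "i < sum_list (map fst n_as)" "j < sum_list (map fst n_as)"
    and "jordan_matrix n_as $$ (i,j) \<noteq> (0::'a::{zero,one})"
  shows "i = j \<or> (Suc i = j \<and> jordan_matrix n_as $$ (i,j) = 1 \<and>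
           jordan_matrix n_as $$ (i,i) = 0 \<and> jordan_matrix n_as $$ (j,j) = 0)"
  using assms
proof (induction n_as arbitrary: i j)
  case Nil
  then show ?case by simp
next
  case (Cons na n_as)
  obtain n a where na: "na = (n,a)" by fastforce
  let ?D = "sum_list (map fst n_as)"
  have tail: "\<forall>(n, a) \<in> set n_as. 1 < n \<longrightarrow> a = 0" using Cons.prems(1) by simp
  have a0: "1 < n \<Longrightarrow> a = 0" using Cons.prems(1) na by auto
  have lt: "i < n + ?D" "j < n + ?D" using Cons.prems na by auto
  have entry: "jordan_matrix (na # n_as) $$ (i',j') =
     (if i' < n then if j' < n then (if i' = j' then a else if Suc i' = j' then 1 else 0) else 0
      else if j' < n then 0 else jordan_matrix n_as $$ (i' - n, j' - n))"
    if "i' < n + ?D" "j' < n + ?D" for i' j'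
    unfolding na jordan_matrix_Cons using that by (subst index_mat_four_block) auto
  show ?case
  proof (cases "i < n")
    case True
    then show ?thesis using Cons.prems(4) lt a0 by (auto simp: entry split: if_splits)
  next
    case False
    then have jn: "\<not> j < n" using Cons.prems(4) lt by (auto simp: entry split: if_splits)
    have "i - n = j - n \<or> (Suc (i - n) = j - n \<and> jordan_matrix n_as $$ (i - n, j - n) = 1 \<and>
        jordan_matrix n_as $$ (i - n, i - n) = 0 \<and> jordan_matrix n_as $$ (j - n, j - n) = 0)"
      using Cons.IH[OF tail] Cons.prems(4) False jn lt by (simp add: entry)
    then show ?thesis using False jn lt by (auto simp: entry)
  qed
qed

text \<open>The matrix of an operator whose Jordan blocks of size > 1 are nilpotent, read off in the original
  basis: \<rho> k is the position of the basis vector \<open>e\<^sub>k\<close> in the Jordan ordering, and every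
  off-diagonal entry is a superdiagonal 1 of a nilpotent block.\<close>

definition jordan_shaped :: "nat \<Rightarrow> 'a::semiring_1 mat \<Rightarrow> (nat \<Rightarrow> nat) \<Rightarrow> bool" where
  "jordan_shaped N A \<rho> \<longleftrightarrow> A \<in> carrier_mat N N \<and> inj_on \<rho> {..<N} \<and>
    (\<forall>p<N. \<forall>q<N. A $$ (p,q) \<noteq> 0 \<longrightarrow> p = q \<or>
       (Suc (\<rho> p) = \<rho> q \<and> A $$ (p,q) = 1 \<and> A $$ (p,p) = 0 \<and> A $$ (q,q) = 0))"

lemma reordered_jordan_jordan_shaped:
  assumes A: "A \<in> carrier_mat N N" and J: "reordered_jordan N A \<sigma> n_as"
    and nilpotent: "\<forall>(n, a) \<in> set n_as. 1 < n \<longrightarrow> a = 0"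
  shows "jordan_shaped N A (inv_into UNIV \<sigma>)"
proof -
  have \<sigma>: "\<sigma> permutes {..<N}" and eq: "mat N N (\<lambda>(i,j). A $$ (\<sigma> i, \<sigma> j)) = jordan_matrix n_as"
    using J unfolding reordered_jordan_def by auto
  have size: "sum_list (map fst n_as) = N"
    using arg_cong[OF eq, of dim_row] by simp
  have entry: "A $$ (p, q) = jordan_matrix n_as $$ (inv_into UNIV \<sigma> p, inv_into UNIV \<sigma> q)"
    if "p < N" "q < N" for p q
    using that permutes_inverses(1)[OF \<sigma>] permutes_in_image[OF permutes_inv[OF \<sigma>]]
    by (simp add: eq[symmetric])
  have inv_lt: "inv_into UNIV \<sigma> p < N" if "p < N" for p
    using that permutes_in_image[OF permutes_inv[OF \<sigma>]] by simp
  have inj: "inj_on (inv_into UNIV \<sigma>) {..<N}"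
    using permutes_inj[OF permutes_inv[OF \<sigma>]] by (rule inj_on_subset) simp
  show ?thesis unfolding jordan_shaped_def
  proof (intro conjI A inj allI impI)
    fix p q assume pq: "p < N" "q < N" "A $$ (p, q) \<noteq> 0"
    then have "inv_into UNIV \<sigma> p = inv_into UNIV \<sigma> q \<or>
        (Suc (inv_into UNIV \<sigma> p) = inv_into UNIV \<sigma> q \<and> A $$ (p, q) = 1 \<and>
         A $$ (p, p) = 0 \<and> A $$ (q, q) = 0)"
      using jordan_matrix_nonzero_entry[OF nilpotent] inv_lt size by (simp add: entry)
    then show "p = q \<or> (Suc (inv_into UNIV \<sigma> p) = inv_into UNIV \<sigma> q \<and> A $$ (p, q) = 1 \<and>
        A $$ (p, p) = 0 \<and> A $$ (q, q) = 0)"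
      using inj pq by (auto dest: inj_onD)
  qed
qed

lemma mult_mat_vec_unit_vec:
  fixes A :: "'a::semiring_1 mat"
  assumes "A \<in> carrier_mat n m" "k < m"
  shows "A *\<^sub>v unit_vec m k = col A k"
  by (rule eq_vecI) (use assms in auto)

lemma eigenvalue_of_unit_vec:
  fixes A :: "'a::semiring_1 mat"
  assumes "A \<in> carrier_mat n n" "k < n" "A *\<^sub>v unit_vec n k = c \<cdot>\<^sub>v unit_vec n k"
  shows "c = A $$ (k, k)"
  using arg_cong[OF assms(3), of "\<lambda>v. v $ k"] assms(1,2) by (simp add: mult_mat_vec_unit_vec)

lemma mult_mat_vec_unit_vec_diagonal:
  fixes A :: "'a::semiring_1 mat"
  assumes "A \<in> carrier_mat n n" "k < n" "\<forall>p<n. p \<noteq> k \<longrightarrow> A $$ (p, k) = 0"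
  shows "A *\<^sub>v unit_vec n k = A $$ (k, k) \<cdot>\<^sub>v unit_vec n k"
  by (rule eq_vecI) (use assms in \<open>auto simp: mult_mat_vec_unit_vec\<close>)

lemma mult_mat_vec_single_term:
  fixes A :: "'a::semiring_1 mat"
  assumes "A \<in> carrier_mat n m" "v \<in> carrier_vec m" "p < n" "q < m"
    and "\<forall>q'<m. q' \<noteq> q \<longrightarrow> A $$ (p, q') * v $ q' = 0"
  shows "(A *\<^sub>v v) $ p = A $$ (p, q) * v $ q"
proof -
  have "(A *\<^sub>v v) $ p = (\<Sum>i\<in>{0..<m}. A $$ (p, i) * v $ i)"
    using assms(1-3) by (simp add: scalar_prod_def)
  also have "\<dots> = A $$ (p, q) * v $ q"
    using assms(4,5) by (subst sum.remove[of _ q]) (auto intro!: sum.neutral)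
  finally show ?thesis .
qed

lemma jordan_shaped_row_unique:
  assumes "jordan_shaped N A \<rho>" "p < N" "q < N" "q' < N" "A $$ (p, q) \<noteq> 0" "A $$ (p, q') \<noteq> 0"
  shows "q = q'"
  using assms unfolding jordan_shaped_def by (metis inj_onD lessThan_iff)

lemma jordan_shaped_col_unique:
  assumes "jordan_shaped N A \<rho>" "p < N" "p' < N" "q < N" "A $$ (p, q) \<noteq> 0" "A $$ (p', q) \<noteq> 0"
  shows "p = p'"
  using assms unfolding jordan_shaped_def by (metis inj_onD lessThan_iff nat.inject)

lemma jordan_shaped_shift:
  assumes A: "jordan_shaped N A \<rho>" and "p < N" "k < N" "A $$ (p, k) \<noteq> 0" "p \<noteq> k"
  shows "A *\<^sub>v unit_vec N k = unit_vec N p" and "A $$ (k, k) = 0" and "A $$ (p, p) = 0"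
    and "\<rho> p < \<rho> k"
proof -
  have Ac: "A \<in> carrier_mat N N" using A unfolding jordan_shaped_def by simp
  have shift: "Suc (\<rho> p) = \<rho> k \<and> A $$ (p, k) = 1 \<and> A $$ (p, p) = 0 \<and> A $$ (k, k) = 0"
    using A assms(2-5) unfolding jordan_shaped_def by blast
  then show "A $$ (k, k) = 0" "A $$ (p, p) = 0" "\<rho> p < \<rho> k" by auto
  show "A *\<^sub>v unit_vec N k = unit_vec N p"
  proof (rule eq_vecI)
    fix i assume "i < dim_vec (unit_vec N p)"
    then have i: "i < N" by simp
    have "A $$ (i, k) = 0" if "i \<noteq> p"
      using jordan_shaped_col_unique[OF A i assms(2,3) _ assms(4)] that by blast
    then show "(A *\<^sub>v unit_vec N k) $ i = unit_vec N p $ i"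
      using Ac i assms(2,3) shift by (auto simp: mult_mat_vec_unit_vec)
  qed (use Ac in simp)
qed

lemma jordan_shaped_no_return:
  fixes A X :: "'a::semiring_1 mat"
  assumes A: "jordan_shaped N A \<rho>" and X: "X \<in> carrier_mat N N" and comm: "X * A = A * X"
    and "k < N" "A $$ (k, k) = 0"
  shows "(X * A) *\<^sub>v unit_vec N k \<noteq> unit_vec N k"
  using assms(4,5)
proof (induction "\<rho> k" arbitrary: k rule: less_induct)
  case less
  have Ac: "A \<in> carrier_mat N N" using A unfolding jordan_shaped_def by simp
  have XA: "(X * A) *\<^sub>v unit_vec N j = X *\<^sub>v (A *\<^sub>v unit_vec N j)" for j
    using X Ac by (simp add: assoc_mult_mat_vec)
  show ?case
  proof
    assume fixed: "(X * A) *\<^sub>v unit_vec N k = unit_vec N k"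
    show False
    proof (cases "\<exists>p<N. p \<noteq> k \<and> A $$ (p, k) \<noteq> 0")
      case True
      then obtain p where p: "p < N" "p \<noteq> k" "A $$ (p, k) \<noteq> 0" by blast
      note shift = jordan_shaped_shift[OF A p(1) less.prems(1) p(3,2)]
      have "X *\<^sub>v unit_vec N p = unit_vec N k"
        using fixed shift(1) XA by simp
      \<comment> \<open>commutativity moves the fixed point one step down the Jordan chain\<close>
      then have "(X * A) *\<^sub>v unit_vec N p = unit_vec N p"
        using comm shift(1) X Ac by (simp add: assoc_mult_mat_vec)
      then show False using less.hyps[OF shift(4) p(1) shift(3)] by simp
    next
      case False
      then have "A *\<^sub>v unit_vec N k = 0\<^sub>v N"
        using Ac less.prems by (intro eq_vecI) (auto simp: mult_mat_vec_unit_vec)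
      then have "((X * A) *\<^sub>v unit_vec N k) $ k = 0"
        using XA X less.prems(1) by simp
      then show False using fixed less.prems(1) by simp
    qed
  qed
qed

definition vec_supp :: "'a::zero vec \<Rightarrow> nat set" where
  "vec_supp v = {k. k < dim_vec v \<and> v $ k \<noteq> 0}"

lemma finite_vec_supp [simp]: "finite (vec_supp v)"
  unfolding vec_supp_def by simp

lemma vec_supp_empty_iff:
  assumes "v \<in> carrier_vec n"
  shows "vec_supp v = {} \<longleftrightarrow> v = 0\<^sub>v n"
  using assms unfolding vec_supp_def by (auto intro!: eq_vecI)

locale commuting_jordan_family =
  fixes N :: nat and S :: "'a::field mat set"
  assumes commute: "A \<in> S \<Longrightarrow> C \<in> S \<Longrightarrow> A * C = C * A"
    and shaped: "A \<in> S \<Longrightarrow> \<exists>\<rho>. jordan_shaped N A \<rho>"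
begin

lemma carrier: "A \<in> S \<Longrightarrow> A \<in> carrier_mat N N"
  using shaped unfolding jordan_shaped_def by blast

inductive_set products :: "'a mat set" where
  one: "1\<^sub>m N \<in> products"
| mult: "A \<in> S \<Longrightarrow> X \<in> products \<Longrightarrow> A * X \<in> products"

lemma products_carrier: "X \<in> products \<Longrightarrow> X \<in> carrier_mat N N"
  by (induction rule: products.induct) (auto dest: carrier)

lemma products_commute:
  assumes "X \<in> products" "B \<in> S"
  shows "X * B = B * X"
  using assms(1)
proof induction
  case one
  show ?case using carrier[OF assms(2)] by simp
next
  case (mult A X)
  have A: "A \<in> carrier_mat N N" and B: "B \<in> carrier_mat N N" and X: "X \<in> carrier_mat N N"
    using carrier mult.hyps assms(2) products_carrier by auto
  have "A * X * B = A * (X * B)" using A X B by (rule assoc_mult_mat)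
  also have "\<dots> = (A * B) * X" using A B X mult.IH by (simp add: assoc_mult_mat)
  also have "\<dots> = B * (A * X)" using A B X commute[OF mult.hyps(1) assms(2)] by (simp add: assoc_mult_mat)
  finally show ?case .
qed

definition shift_rel :: "nat rel" where
  "shift_rel = {(k, p). k < N \<and> p < N \<and> p \<noteq> k \<and> (\<exists>A\<in>S. A $$ (p, k) \<noteq> 0)}"

lemma shift_rel_trancl_product:
  assumes "(k, k') \<in> shift_rel\<^sup>+"
  shows "\<exists>A\<in>S. \<exists>p<N. p \<noteq> k \<and> A $$ (p, k) \<noteq> 0 \<and> (\<exists>X\<in>products. X *\<^sub>v unit_vec N p = unit_vec N k')"
  using assms
proof induction
  case (base k')
  then have "k' < N" "k' \<noteq> k" "\<exists>A\<in>S. A $$ (k', k) \<noteq> 0" unfolding shift_rel_def by auto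
  moreover have "(1\<^sub>m N :: 'a mat) *\<^sub>v unit_vec N k' = unit_vec N k'" by simp
  ultimately show ?case using products.one by blast
next
  case (step y z)
  then obtain A p X where A: "A \<in> S" "p < N" "p \<noteq> k" "A $$ (p, k) \<noteq> 0"
    and X: "X \<in> products" "X *\<^sub>v unit_vec N p = unit_vec N y" by blast
  obtain B where B: "B \<in> S" "B $$ (z, y) \<noteq> 0" and yz: "y < N" "z < N" "z \<noteq> y"
    using step.hyps(2) unfolding shift_rel_def by auto
  obtain \<rho> where "jordan_shaped N B \<rho>" using shaped[OF B(1)] by blast
  then have "B *\<^sub>v unit_vec N y = unit_vec N z" using jordan_shaped_shift yz B(2) by blast
  then have "(B * X) *\<^sub>v unit_vec N p = unit_vec N z"
    using X carrier[OF B(1)] products_carrier[OF X(1)] A(2) by (simp add: assoc_mult_mat_vec)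
  then show ?case using A products.mult[OF B(1) X(1)] by blast
qed

lemma shift_rel_trancl_lt: "(k, p) \<in> shift_rel\<^sup>+ \<Longrightarrow> p < N"
  using trancl_range[of shift_rel] unfolding shift_rel_def by blast

lemma shift_rel_trancl_irrefl: "(k, k) \<notin> shift_rel\<^sup>+"
proof
  assume cycle: "(k, k) \<in> shift_rel\<^sup>+"
  then obtain A p X where A: "A \<in> S" "p < N" "p \<noteq> k" "A $$ (p, k) \<noteq> 0"
    and X: "X \<in> products" "X *\<^sub>v unit_vec N p = unit_vec N k"
    using shift_rel_trancl_product by blast
  obtain \<rho> where J: "jordan_shaped N A \<rho>" using shaped[OF A(1)] by blast
  have k: "k < N" using cycle by (rule shift_rel_trancl_lt)
  note shift = jordan_shaped_shift[OF J A(2) k A(4,3)]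
  have "(X * A) *\<^sub>v unit_vec N k = unit_vec N k"
    using X shift(1) carrier[OF A(1)] products_carrier[OF X(1)] by (simp add: assoc_mult_mat_vec)
  then show False
    using jordan_shaped_no_return[OF J products_carrier[OF X(1)] products_commute[OF X(1) A(1)] k shift(2)]
    by simp
qed

definition height :: "nat \<Rightarrow> nat" where
  "height k = card (shift_rel\<^sup>+ `` {k})"

lemma height_shift_less:
  assumes "(k, p) \<in> shift_rel"
  shows "height p < height k"
proof -
  have "shift_rel\<^sup>+ `` {k} \<subseteq> {..<N}"
    using shift_rel_trancl_lt by blast
  then have "finite (shift_rel\<^sup>+ `` {k})" by (rule finite_subset) simp
  moreover have "shift_rel\<^sup>+ `` {p} \<subset> shift_rel\<^sup>+ `` {k}"
    using assms shift_rel_trancl_irrefl[of p] by (blast intro: trancl_into_trancl2)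
  ultimately show ?thesis unfolding height_def by (rule psubset_card_mono)
qed

definition weight :: "'a vec \<Rightarrow> nat" where
  "weight v = (\<Sum>k\<in>vec_supp v. Suc (height k))"

lemma weight_psubset:
  assumes "vec_supp v \<subset> vec_supp w"
  shows "weight v < weight w"
proof -
  have "weight w = (\<Sum>k\<in>vec_supp w - vec_supp v. Suc (height k)) + weight v"
    unfolding weight_def using assms by (simp add: sum.subset_diff)
  moreover have "vec_supp w - vec_supp v \<noteq> {}" using assms by auto
  then have "(\<Sum>k\<in>vec_supp w - vec_supp v. Suc (height k)) \<noteq> 0" by (simp add: sum_eq_0_iff) blast
  ultimately show ?thesis by linarith
qed

text \<open>Each coordinate \<open>x\<close> of \<open>A w\<close> is fed by a coordinate \<open>\<psi> x\<close> of \<open>w\<close>, injectively and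
  with \<open>height x \<le> height (\<psi> x)\<close>; the shift \<open>k \<rightarrow> p\<close> makes the inequality strict at \<open>p\<close>.\<close>

lemma weight_mult_less:
  assumes A: "A \<in> S" and w: "w \<in> carrier_vec N" and k: "k \<in> vec_supp w"
    and p: "p < N" "p \<noteq> k" "A $$ (p, k) \<noteq> 0"
  shows "A *\<^sub>v w \<noteq> 0\<^sub>v N" and "weight (A *\<^sub>v w) < weight w"
proof -
  obtain \<rho> where J: "jordan_shaped N A \<rho>" using shaped[OF A] by blast
  have Ac: "A \<in> carrier_mat N N" using carrier[OF A] .
  have kN: "k < N" "w $ k \<noteq> 0" using k w unfolding vec_supp_def by auto
  define v where "v = A *\<^sub>v w"
  have source: "\<exists>q\<in>vec_supp w. A $$ (x, q) \<noteq> 0" if "x \<in> vec_supp v" for x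
  proof -
    have "(\<Sum>q\<in>{0..<N}. A $$ (x, q) * w $ q) \<noteq> 0"
      using that Ac w unfolding v_def vec_supp_def by (auto simp: scalar_prod_def)
    then obtain q where "q \<in> {0..<N}" "A $$ (x, q) * w $ q \<noteq> 0"
      by (rule sum.not_neutral_contains_not_neutral)
    then show ?thesis using w unfolding vec_supp_def by auto
  qed
  define \<psi> where "\<psi> x = (SOME q. q \<in> vec_supp w \<and> A $$ (x, q) \<noteq> 0)" for x
  have \<psi>: "\<psi> x \<in> vec_supp w \<and> A $$ (x, \<psi> x) \<noteq> 0" if "x \<in> vec_supp v" for x
    unfolding \<psi>_def using someI_ex[OF source[OF that, unfolded Bex_def]] .
  have supp_v: "x < N" if "x \<in> vec_supp v" for x
    using that Ac unfolding v_def vec_supp_def by simp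
  have supp_w: "q < N" if "q \<in> vec_supp w" for q
    using that w unfolding vec_supp_def by simp
  have inj: "inj_on \<psi> (vec_supp v)"
    by (rule inj_onI) (metis \<psi> supp_v supp_w jordan_shaped_col_unique[OF J])
  have height_le: "height x \<le> height (\<psi> x)" if "x \<in> vec_supp v" for x
    using \<psi>[OF that] A supp_v[OF that] supp_w[of "\<psi> x"]
    by (cases "x = \<psi> x") (auto intro!: less_imp_le height_shift_less simp: shift_rel_def)
  have "v $ p = A $$ (p, k) * w $ k"
    unfolding v_def using jordan_shaped_row_unique[OF J p(1) kN(1)] p(3)
    by (intro mult_mat_vec_single_term[OF Ac w p(1) kN(1)]) auto
  then have p_supp: "p \<in> vec_supp v"
    using p kN Ac unfolding v_def vec_supp_def by simp
  then show "A *\<^sub>v w \<noteq> 0\<^sub>v N" using p(1) unfolding v_def vec_supp_def by auto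
  have "\<psi> p = k" using jordan_shaped_row_unique[OF J p(1)] \<psi>[OF p_supp] supp_w kN p(3) by blast
  then have "height p < height (\<psi> p)"
    using A p kN by (auto intro!: height_shift_less simp: shift_rel_def)
  then have "weight v < (\<Sum>x\<in>vec_supp v. Suc (height (\<psi> x)))"
    unfolding weight_def using height_le p_supp by (intro sum_strict_mono_ex1) auto
  also have "\<dots> = (\<Sum>q\<in>\<psi> ` vec_supp v. Suc (height q))"
    by (simp add: sum.reindex[OF inj])
  also have "\<dots> \<le> weight w"
    unfolding weight_def using \<psi> by (intro sum_mono2) auto
  finally show "weight (A *\<^sub>v w) < weight w" unfolding v_def .
qed

end

locale min_weight_vector = commuting_jordan_family +
  fixes W :: "'a vec set" and w :: "'a vec"
  assumes subspace: "subspace_of N W"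
    and invariant: "A \<in> S \<Longrightarrow> v \<in> W \<Longrightarrow> A *\<^sub>v v \<in> W"
    and w_in: "w \<in> W" and w_nonzero: "w \<noteq> 0\<^sub>v N"
    and minimal: "v \<in> W \<Longrightarrow> v \<noteq> 0\<^sub>v N \<Longrightarrow> weight w \<le> weight v"
begin

lemma w_carrier: "w \<in> carrier_vec N"
  using subspace w_in unfolding subspace_of_def by auto

lemma supp_col_diagonal:
  assumes "A \<in> S" "k \<in> vec_supp w" "p < N" "p \<noteq> k"
  shows "A $$ (p, k) = 0"
  using weight_mult_less[OF assms(1) w_carrier assms(2-4)] invariant[OF assms(1) w_in] minimal
  by (meson leD)

lemma supp_common_eigen_basis_vec:
  assumes "k \<in> vec_supp w"
  shows "common_eigen_basis_vec N S k"
proof -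
  have k: "k < N" using assms w_carrier unfolding vec_supp_def by simp
  have "A *\<^sub>v unit_vec N k = A $$ (k, k) \<cdot>\<^sub>v unit_vec N k" if "A \<in> S" for A
    using mult_mat_vec_unit_vec_diagonal[OF carrier[OF that] k] supp_col_diagonal[OF that assms] by blast
  then show ?thesis unfolding common_eigen_basis_vec_def using k by blast
qed

lemma mult_w_index:
  assumes A: "A \<in> S" and p: "p < N"
  shows "(A *\<^sub>v w) $ p = A $$ (p, p) * w $ p"
  using supp_col_diagonal[OF A] w_carrier p
  by (intro mult_mat_vec_single_term[OF carrier[OF A] w_carrier p p]) (auto simp: vec_supp_def)

lemma supp_eigenvalue_eq:
  assumes A: "A \<in> S" and k: "k \<in> vec_supp w" and k': "k' \<in> vec_supp w"
  shows "A $$ (k, k) = A $$ (k', k')"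
proof (rule ccontr)
  assume ne: "A $$ (k, k) \<noteq> A $$ (k', k')"
  define v where "v = A *\<^sub>v w + (- A $$ (k', k')) \<cdot>\<^sub>v w"
  have "v \<in> W" using subspace invariant[OF A w_in] w_in unfolding v_def subspace_of_def by blast
  have v_index: "v $ p = (A $$ (p, p) - A $$ (k', k')) * w $ p" if "p < N" for p
    using mult_w_index[OF A that] that carrier[OF A] w_carrier unfolding v_def by (simp add: algebra_simps)
  have "dim_vec v = N" using carrier[OF A] w_carrier unfolding v_def by simp
  then have "vec_supp v \<subseteq> vec_supp w - {k'}" "k \<in> vec_supp v"
    using v_index ne k w_carrier unfolding vec_supp_def by auto
  then have "weight v < weight w" "v \<noteq> 0\<^sub>v N"
    using k' by (auto intro!: weight_psubset simp: vec_supp_def)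
  then show False using minimal[OF \<open>v \<in> W\<close>] by simp
qed

lemma unit_vec_in_subspace:
  assumes separating: "\<forall>i j. common_eigen_basis_vec N S i \<and> common_eigen_basis_vec N S j \<and> i \<noteq> j \<longrightarrow>
                   (\<exists>A\<in>S. \<exists>c d. A *\<^sub>v unit_vec N i = c \<cdot>\<^sub>v unit_vec N i \<and>
                                  A *\<^sub>v unit_vec N j = d \<cdot>\<^sub>v unit_vec N j \<and> c \<noteq> d)"
  shows "\<exists>i. common_eigen_basis_vec N S i \<and> unit_vec N i \<in> W"
proof -
  obtain k where k: "k \<in> vec_supp w"
    using vec_supp_empty_iff[OF w_carrier] w_nonzero by blast
  have kN: "k < N" "w $ k \<noteq> 0" using k w_carrier unfolding vec_supp_def by auto
  have supp: "vec_supp w = {k}"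
  proof (rule ccontr)
    assume "vec_supp w \<noteq> {k}"
    then obtain k' where k': "k' \<in> vec_supp w" "k' \<noteq> k" using k by blast
    have k'N: "k' < N" using k' w_carrier unfolding vec_supp_def by simp
    obtain A c d where A: "A \<in> S" and c: "A *\<^sub>v unit_vec N k' = c \<cdot>\<^sub>v unit_vec N k'"
      and d: "A *\<^sub>v unit_vec N k = d \<cdot>\<^sub>v unit_vec N k" and "c \<noteq> d"
      using separating supp_common_eigen_basis_vec[OF k'(1)] supp_common_eigen_basis_vec[OF k] k'(2)
      by blast
    then show False
      using eigenvalue_of_unit_vec[OF carrier[OF A] k'N c] eigenvalue_of_unit_vec[OF carrier[OF A] kN(1) d]
        supp_eigenvalue_eq[OF A k'(1) k] by simp
  qed
  have "unit_vec N k = (1 / w $ k) \<cdot>\<^sub>v w"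
    using supp kN w_carrier unfolding vec_supp_def by (intro eq_vecI) auto
  then have "unit_vec N k \<in> W" using subspace w_in unfolding subspace_of_def by simp
  then show ?thesis using supp_common_eigen_basis_vec[OF k] by blast
qed

end

theorem lemma5p2:
  fixes N :: nat and S :: "'a::field mat set" and W :: "'a vec set"
  assumes S_dim: "\<forall>A\<in>S. A \<in> carrier_mat N N"
    and S_comm: "\<forall>A\<in>S. \<forall>C\<in>S. A * C = C * A"
    and S_jordan: "\<forall>A\<in>S. \<exists>\<sigma> n_as. reordered_jordan N A \<sigma> n_as \<and>
                        (\<forall>(n, a) \<in> set n_as. 1 < n \<longrightarrow> a = 0)"
    and S_sep: "\<forall>i j. common_eigen_basis_vec N S i \<and> common_eigen_basis_vec N S j \<and> i \<noteq> j \<longrightarrow>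
                   (\<exists>A\<in>S. \<exists>c d. A *\<^sub>v unit_vec N i = c \<cdot>\<^sub>v unit_vec N i \<and>
                                  A *\<^sub>v unit_vec N j = d \<cdot>\<^sub>v unit_vec N j \<and> c \<noteq> d)"
    and W_sub: "subspace_of N W"
    and W_inv: "\<forall>A\<in>S. \<forall>w\<in>W. A *\<^sub>v w \<in> W"
  shows "W \<noteq> {0\<^sub>v N} \<longleftrightarrow> (\<exists>i. common_eigen_basis_vec N S i \<and> unit_vec N i \<in> W)"
proof
  assume "\<exists>i. common_eigen_basis_vec N S i \<and> unit_vec N i \<in> W"
  then obtain i where "i < N" "unit_vec N i \<in> W" unfolding common_eigen_basis_vec_def by blast
  then show "W \<noteq> {0\<^sub>v N}" using unit_vec_nonzero[of i N] by force
next
  assume "W \<noteq> {0\<^sub>v N}"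
  then obtain w0 where "w0 \<in> W" "w0 \<noteq> 0\<^sub>v N" using W_sub unfolding subspace_of_def by blast
  interpret commuting_jordan_family N S
    using S_dim S_comm S_jordan reordered_jordan_jordan_shaped by unfold_locales blast+
  obtain w where "w \<in> W" "w \<noteq> 0\<^sub>v N" and "\<And>v. v \<in> W \<Longrightarrow> v \<noteq> 0\<^sub>v N \<Longrightarrow> weight w \<le> weight v"
    using ex_has_least_nat[of "\<lambda>v. v \<in> W \<and> v \<noteq> 0\<^sub>v N" w0 weight] \<open>w0 \<in> W\<close> \<open>w0 \<noteq> 0\<^sub>v N\<close> by blast
  then interpret min_weight_vector N S W w
    using W_sub W_inv by unfold_locales blast+
  show "\<exists>i. common_eigen_basis_vec N S i \<and> unit_vec N i \<in> W"
    using unit_vec_in_subspace S_sep by blast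
qed

end
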